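(* Let $G$ be a $g$-barrelled convergence group and $H$ a locally compact convergence group. Then every compact subset of $\Gamma_s(G,\Gamma_c H)$ is equicontinuous, i.e. equicontinuous as a subset of $\Gamma(G,\Gamma_c H)$.
   Context: All groups are abelian. A convergence structure on a set $X$ assigns to each $x$ a collection of filters converging to $x$. This assignment must satisfy three conditions: point ultrafilters converge to their point; finite intersections of filters converging to $x$ converge to $x$; and finer filters of convergent filters converge. A map is continuous if it sends filters converging to $x$ to filters converging to the image of $x$. A convergence group is an abelian group with a convergence structure such that $\mathcal F\to x$, $\mathcal G\to y$ imply $\mathcal F-\mathcal G\to x-y$. A convergence space is Hausdorff if every filter has at most one limit. A subset $K$ is compact if every ultrafilter containing $K$ converges to a point of $K$. A convergence space is locally compact if it is Hausdorff and each convergent filter contains a compact set. $\mathbb T=\mathbb R/\mathbb Z$. For convergence groups $G,L$, $\Gamma(G,L)$ is the group of continuous homomorphisms $G\to L$. $\Gamma_s(G,L)$ is $\Gamma(G,L)$ with the initial topology (or convergence structure) of pointwise convergence. $\Gamma_c(G,L)$ is $\Gamma(G,L)$ with the continuous convergence structure: $\Phi\to\varphi$ iff for every $\mathcal F\to x$ in $G$, the filter generated by $\{\{\psi(y):\psi\in A,y\in F\}:A\in\Phi,F\in\mathcal F\}$ converges to $\varphi(x)$ in $L$. Write $\Gamma_c H=\Gamma_c(H,\mathbb T)$ and $\Gamma_s G=\Gamma_s(G,\mathbb T)$. A set $M\subseteq\Gamma(G,L)$ is equicontinuous if for every filter $\mathcal F\to0$ in $G$, the filter $M(\mathcal F)$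 generated by the sets $\{\varphi(x):\varphi\in M,x\in F\}$, $F\in\mathcal F$, converges to $0$ in $L$. A convergence group $G$ is $g$-barrelled if every compact subset of $\Gamma_s G$ is equicontinuous. *)

theory Defs
  imports Complex_Main "HOL-Library.Function_Algebras"
begin

definition int_diff :: "real \<Rightarrow> real \<Rightarrow> bool" where
  "int_diff x y \<longleftrightarrow> x - y \<in> \<int>"

lemma equivp_int_diff: "equivp int_diff"
proof (rule equivpI)
  show "reflp int_diff" by (rule reflpI) (simp add: int_diff_def)
  show "symp int_diff"
    by (rule sympI) (metis Ints_minus int_diff_def minus_diff_eq)
  show "transp int_diff"
  proof (rule transpI)
    fix x y z assume "int_diff x y" "int_diff y z"
    then have "(x - y) + (y - z) \<in> \<int>" unfolding int_diff_def by (rule Ints_add)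
    then show "int_diff x z" by (simp add: int_diff_def)
  qed
qed

quotient_type torus = real / int_diff
  by (rule equivp_int_diff)

instantiation torus :: ab_group_add
begin

lift_definition zero_torus :: torus is "0::real" .

lift_definition plus_torus :: "torus \<Rightarrow> torus \<Rightarrow> torus" is "(+)"
proof -
  fix a b c d :: real assume "int_diff a b" "int_diff c d"
  then have "(a - b) + (c - d) \<in> \<int>" unfolding int_diff_def by (rule Ints_add)
  then show "int_diff (a + c) (b + d)" by (simp add: int_diff_def algebra_simps)
qed

lift_definition uminus_torus :: "torus \<Rightarrow> torus" is uminus
proof -
  fix a b :: real assume "int_diff a b"
  then have "- (a - b) \<in> \<int>" unfolding int_diff_def by (rule Ints_minus)
  then show "int_diff (- a) (- b)" by (simp add: int_diff_def)
qed

lift_definition minus_torus :: "torus \<Rightarrow> torus \<Rightarrow> torus" is "(-)"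
proof -
  fix a b c d :: real assume "int_diff a b" "int_diff c d"
  then have "(a - b) - (c - d) \<in> \<int>" unfolding int_diff_def by (rule Ints_diff)
  then show "int_diff (a - c) (b - d)" by (simp add: int_diff_def algebra_simps)
qed

instance
  by standard (transfer, simp add: int_diff_def algebra_simps)+

end

text \<open>The embedding of T onto the unit circle, x + Z \<mapsto> exp(2 pi i x); it is a
  homeomorphism onto the unit circle and defines the usual topology of T.\<close>

lift_definition torus_emb :: "torus \<Rightarrow> complex" is "\<lambda>x. cis (2 * pi * x)"
proof -
  fix a b :: real assume "int_diff a b"
  then have "cis (2 * pi * (a - b)) = 1" by (simp add: int_diff_def)
  then have "cis (2 * pi * (a - b)) * cis (2 * pi * b) = cis (2 * pi * b)" by simp
  then show "cis (2 * pi * a) = cis (2 * pi * b)" by (simp add: cis_mult algebra_simps)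
qed

definition conv_T :: "torus filter \<Rightarrow> torus \<Rightarrow> bool" where
  "conv_T F x \<longleftrightarrow> filterlim torus_emb (nhds (torus_emb x)) F"

text \<open>A convergence structure on a carrier set S (inside an ambient type) is a relation
  c F x ("F converges to x"). The intersection of two
  filters is sup F G in Isabelle's filter order (where F \<le> G means F is finer than G).
  Note: the improper filter bot is finer than every filter, hence converges to every
  point of S; this is a harmless convention (the paper only considers proper filters).\<close>

definition conv_space :: "'a set \<Rightarrow> ('a filter \<Rightarrow> 'a \<Rightarrow> bool) \<Rightarrow> bool" where
  "conv_space S c \<longleftrightarrow>
     (\<forall>F x. c F x \<longrightarrow> x \<in> S \<and> F \<le> principal S) \<and>
     (\<forall>x\<in>S. c (principal {x}) x) \<and>
     (\<forall>F G x. c F x \<longrightarrow> c G x \<longrightarrow> c (sup F G) x) \<and>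
     (\<forall>F G x. c F x \<longrightarrow> G \<le> F \<longrightarrow> c G x)"

definition filter_diff :: "'a::ab_group_add filter \<Rightarrow> 'a filter \<Rightarrow> 'a filter" where
  "filter_diff F G = filtermap (\<lambda>(a, b). a - b) (F \<times>\<^sub>F G)"

definition conv_group :: "'a::ab_group_add set \<Rightarrow> ('a filter \<Rightarrow> 'a \<Rightarrow> bool) \<Rightarrow> bool" where
  "conv_group S c \<longleftrightarrow> conv_space S c \<and> 0 \<in> S \<and> (\<forall>x\<in>S. \<forall>y\<in>S. x - y \<in> S) \<and>
     (\<forall>F G x y. c F x \<longrightarrow> c G y \<longrightarrow> c (filter_diff F G) (x - y))"

definition ultrafilter :: "'a filter \<Rightarrow> bool" where
  "ultrafilter U \<longleftrightarrow> U \<noteq> bot \<and> (\<forall>P. eventually P U \<or> eventually (\<lambda>x. \<not> P x) U)"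

definition conv_hausdorff :: "('a filter \<Rightarrow> 'a \<Rightarrow> bool) \<Rightarrow> bool" where
  "conv_hausdorff c \<longleftrightarrow> (\<forall>F x y. F \<noteq> bot \<longrightarrow> c F x \<longrightarrow> c F y \<longrightarrow> x = y)"

definition conv_compact :: "'a set \<Rightarrow> ('a filter \<Rightarrow> 'a \<Rightarrow> bool) \<Rightarrow> 'a set \<Rightarrow> bool" where
  "conv_compact S c K \<longleftrightarrow> K \<subseteq> S \<and>
     (\<forall>U. ultrafilter U \<longrightarrow> U \<le> principal K \<longrightarrow> (\<exists>x\<in>K. c U x))"

definition locally_compact_conv :: "'a set \<Rightarrow> ('a filter \<Rightarrow> 'a \<Rightarrow> bool) \<Rightarrow> bool" where
  "locally_compact_conv S c \<longleftrightarrow> conv_hausdorff c \<and>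
     (\<forall>F x. c F x \<longrightarrow> (\<exists>K. conv_compact S c K \<and> eventually (\<lambda>y. y \<in> K) F))"

text \<open>The domain group G is a whole type (carrier UNIV) with convergence cG; the codomain
  L has carrier SL (inside an ambient type) and convergence cL.\<close>

definition Gamma :: "('g::ab_group_add filter \<Rightarrow> 'g \<Rightarrow> bool) \<Rightarrow>
    ('l::ab_group_add filter \<Rightarrow> 'l \<Rightarrow> bool) \<Rightarrow> ('g \<Rightarrow> 'l) set" where
  "Gamma cG cL = {\<phi>. (\<forall>x y. \<phi> (x + y) = \<phi> x + \<phi> y) \<and>
                      (\<forall>F x. cG F x \<longrightarrow> cL (filtermap \<phi> F) (\<phi> x))}"

definition conv_s :: "('g::ab_group_add filter \<Rightarrow> 'g \<Rightarrow> bool) \<Rightarrow>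
    ('l::ab_group_add filter \<Rightarrow> 'l \<Rightarrow> bool) \<Rightarrow> ('g \<Rightarrow> 'l) filter \<Rightarrow> ('g \<Rightarrow> 'l) \<Rightarrow> bool" where
  "conv_s cG cL \<Phi> \<phi> \<longleftrightarrow> \<phi> \<in> Gamma cG cL \<and> \<Phi> \<le> principal (Gamma cG cL) \<and>
     (\<forall>x. cL (filtermap (\<lambda>\<psi>. \<psi> x) \<Phi>) (\<phi> x))"

definition eval_filter :: "('g \<Rightarrow> 'l) filter \<Rightarrow> 'g filter \<Rightarrow> 'l filter" where
  "eval_filter \<Phi> F = filtermap (\<lambda>(\<psi>, y). \<psi> y) (\<Phi> \<times>\<^sub>F F)"

definition conv_c :: "('g::ab_group_add filter \<Rightarrow> 'g \<Rightarrow> bool) \<Rightarrow>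
    ('l::ab_group_add filter \<Rightarrow> 'l \<Rightarrow> bool) \<Rightarrow> ('g \<Rightarrow> 'l) filter \<Rightarrow> ('g \<Rightarrow> 'l) \<Rightarrow> bool" where
  "conv_c cG cL \<Phi> \<phi> \<longleftrightarrow> \<phi> \<in> Gamma cG cL \<and> \<Phi> \<le> principal (Gamma cG cL) \<and>
     (\<forall>F x. cG F x \<longrightarrow> cL (eval_filter \<Phi> F) (\<phi> x))"

definition equicontinuous :: "('g::ab_group_add filter \<Rightarrow> 'g \<Rightarrow> bool) \<Rightarrow>
    ('l::ab_group_add filter \<Rightarrow> 'l \<Rightarrow> bool) \<Rightarrow> ('g \<Rightarrow> 'l) set \<Rightarrow> bool" where
  "equicontinuous cG cL M \<longleftrightarrow> M \<subseteq> Gamma cG cL \<and>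
     (\<forall>F. cG F 0 \<longrightarrow> cL (eval_filter (principal M) F) 0)"

text \<open>Gamma_c H = Gamma_c(H, T): carrier Gamma cH conv_T, convergence conv_c cH conv_T.\<close>

definition g_barrelled :: "('g::ab_group_add filter \<Rightarrow> 'g \<Rightarrow> bool) \<Rightarrow> bool" where
  "g_barrelled cG \<longleftrightarrow> (\<forall>K. conv_compact (Gamma cG conv_T) (conv_s cG conv_T) K \<longrightarrow>
                                equicontinuous cG conv_T K)"

end

theory Submission
  imports Defs
begin

(*
  Let K be compact in Gamma_s(G, Gamma_c H).  Equicontinuity of K means that K(F)
  converges continuously to 0 for every F -> 0 in G, i.e. that K(F)(\<H>) -> 0 in T
  for every convergent filter \<H> -> h in H.  Local compactness of H provides a compact
  set C in \<H>, and K(F)(\<H>) is finer than M(F) for the set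
      M = {x \<mapsto> \<phi> x y : \<phi> \<in> K, y \<in> C}  \<subseteq>  Gamma(G, T)
  of "partial evaluations".  So it suffices that M be compact in Gamma_s G: then the
  g-barrelledness of G makes M equicontinuous, i.e. M(F) -> 0.
  M is the image of K \<times> C under (\<phi>, y) \<mapsto> \<phi>(.)(y), and compactness is transported
  along this map with ultrafilters: every ultrafilter on M lifts to one on K \<times> C,
  whose projections converge in K and C by compactness, and joint continuity of the
  evaluation (continuous convergence on Gamma_c H) makes the image converge pointwise.
*)

text \<open>The infimum of a nonempty chain of proper filters is proper; this is the chain
  condition needed for Zorn's lemma.\<close>
lemma Inf_chain_not_bot:
  fixes C :: "'a filter set"
  assumes "C \<noteq> {}" and chain: "\<And>F G. F \<in> C \<Longrightarrow> G \<in> C \<Longrightarrow> F \<le> G \<or> G \<le> F"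
    and "bot \<notin> C"
  shows "Inf C \<noteq> bot"
proof
  assume "Inf C = bot"
  then have "eventually (\<lambda>_. False) (Inf C)" by simp
  moreover have "\<exists>H\<in>C. H \<le> inf F G" if "F \<in> C" "G \<in> C" for F G
    using chain[OF that] that by (metis inf.absorb1 inf.absorb2 order_refl)
  ultimately obtain F where "F \<in> C" "eventually (\<lambda>_. False) F"
    using eventually_Inf_base[OF \<open>C \<noteq> {}\<close>] by blast
  with \<open>bot \<notin> C\<close> show False by (simp add: eventually_False)
qed

lemma maximal_proper_filter_ultrafilter:
  assumes "G \<noteq> bot" and maximal: "\<And>G'. G' \<le> G \<Longrightarrow> G' \<noteq> bot \<Longrightarrow> G' = G"
  shows "ultrafilter G"
  unfolding ultrafilter_def
proof (intro conjI allI \<open>G \<noteq> bot\<close>)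
  fix P
  define G' where "G' = inf G (principal {x. P x})"
  have ev_G': "eventually Q G' \<longleftrightarrow> eventually (\<lambda>x. P x \<longrightarrow> Q x) G" for Q
    unfolding G'_def by (simp add: eventually_inf_principal)
  show "eventually P G \<or> eventually (\<lambda>x. \<not> P x) G"
  proof (rule disjCI)
    assume "\<not> eventually (\<lambda>x. \<not> P x) G"
    then have "\<not> eventually (\<lambda>_. False) G'" using ev_G' by simp
    then have "G' = G" by (intro maximal) (auto simp: G'_def)
    then show "eventually P G" using ev_G'[of P] by simp
  qed
qed

lemma ultrafilter_exists:
  fixes F :: "'a filter"
  assumes "F \<noteq> bot"
  shows "\<exists>U. ultrafilter U \<and> U \<le> F"
proof -
  define A where "A = {G. G \<le> F \<and> G \<noteq> bot}"
  define R where "R = relation_of (\<lambda>G G'. G' \<le> G) A"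
  have po: "partial_order_on A R"
    unfolding R_def by (rule partial_order_on_relation_ofI) auto
  have "\<exists>U\<in>A. \<forall>G\<in>C. U \<le> G" if C: "C \<in> Chains R" for C
  proof (cases "C = {}")
    case True
    then show ?thesis using assms unfolding A_def by blast
  next
    case False
    have "C \<subseteq> A" using Chains_relation_of C unfolding R_def by blast
    have "F' \<le> G \<or> G \<le> F'" if "F' \<in> C" "G \<in> C" for F' G
      using C that unfolding Chains_def R_def relation_of_def by blast
    moreover have "bot \<notin> C" using \<open>C \<subseteq> A\<close> unfolding A_def by blast
    ultimately have "Inf C \<noteq> bot" using Inf_chain_not_bot[OF False] by blast
    moreover obtain G where "G \<in> C" using False by blast
    then have "Inf C \<le> F" using \<open>C \<subseteq> A\<close> unfolding A_def by (blast intro: Inf_lower2)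
    ultimately have "Inf C \<in> A" unfolding A_def by blast
    then show ?thesis by (blast intro: Inf_lower)
  qed
  then obtain U where "U \<in> A" and maximal: "\<And>G. G \<in> A \<Longrightarrow> G \<le> U \<Longrightarrow> G = U"
    using predicate_Zorn[OF po[unfolded R_def]] unfolding R_def by blast
  have "ultrafilter U"
  proof (rule maximal_proper_filter_ultrafilter)
    show "U \<noteq> bot" using \<open>U \<in> A\<close> unfolding A_def by blast
    fix G assume "G \<le> U" "G \<noteq> bot"
    moreover have "G \<le> F" using \<open>G \<le> U\<close> \<open>U \<in> A\<close> unfolding A_def by (blast intro: order_trans)
    ultimately show "G = U" using maximal unfolding A_def by blast
  qed
  with \<open>U \<in> A\<close> show ?thesis unfolding A_def by blast
qed

lemma ultrafilter_filtermap: "ultrafilter W \<Longrightarrow> ultrafilter (filtermap f W)"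
  unfolding ultrafilter_def by (simp add: eventually_filtermap filtermap_bot_iff)

lemma ultrafilter_le:
  assumes "ultrafilter U" "V \<le> U" "V \<noteq> bot"
  shows "U \<le> V"
  unfolding le_filter_def
proof (intro allI impI)
  fix P assume "eventually P V"
  show "eventually P U"
  proof (rule ccontr)
    assume "\<not> eventually P U"
    then have "eventually (\<lambda>x. \<not> P x) V"
      using assms(1,2) unfolding ultrafilter_def le_filter_def by blast
    with \<open>eventually P V\<close> have "eventually (\<lambda>_. False) V" by (auto elim: eventually_elim2)
    with \<open>V \<noteq> bot\<close> show False by simp
  qed
qed

lemma ultrafilter_lift:
  assumes U: "ultrafilter U" "U \<le> principal (f ` A)"
  shows "\<exists>W. ultrafilter W \<and> W \<le> principal A \<and> filtermap f W = U"
proof -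
  define W0 where "W0 = inf (filtercomap f U) (principal A)"
  have "W0 \<noteq> bot"
  proof
    assume "W0 = bot"
    then have "eventually (\<lambda>_. False) W0" by simp
    then obtain Q where "eventually Q U" "\<forall>a\<in>A. \<not> Q (f a)"
      unfolding W0_def eventually_inf_principal eventually_filtercomap by auto
    moreover have "eventually (\<lambda>z. z \<in> f ` A) U" using U(2) by (simp add: le_principal)
    ultimately have "eventually (\<lambda>_. False) U" by (auto elim: eventually_elim2)
    with U(1) show False unfolding ultrafilter_def by simp
  qed
  then obtain W where W: "ultrafilter W" "W \<le> W0" using ultrafilter_exists by blast
  have "filtermap f W \<le> filtermap f (filtercomap f U)"
    using W(2) unfolding W0_def by (meson filtermap_mono inf.boundedE)
  also have "\<dots> \<le> U" by (rule filtermap_filtercomap)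
  finally have "filtermap f W \<le> U" .
  moreover have "filtermap f W \<noteq> bot"
    using W(1) unfolding ultrafilter_def by (simp add: filtermap_bot_iff)
  ultimately have "filtermap f W = U" using ultrafilter_le[OF U(1)] by (simp add: antisym)
  moreover have "W \<le> principal A" using W(2) unfolding W0_def by (meson inf.boundedE)
  ultimately show ?thesis using W(1) by blast
qed

lemma conv_compact_image:
  assumes "f ` A \<subseteq> S"
    and conv: "\<And>W. ultrafilter W \<Longrightarrow> W \<le> principal A \<Longrightarrow> \<exists>a\<in>A. c (filtermap f W) (f a)"
  shows "conv_compact S c (f ` A)"
  unfolding conv_compact_def
proof (intro conjI allI impI \<open>f ` A \<subseteq> S\<close>)
  fix U assume "ultrafilter U" "U \<le> principal (f ` A)"
  then obtain W where "ultrafilter W" "W \<le> principal A" "filtermap f W = U"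
    using ultrafilter_lift by blast
  then show "\<exists>z\<in>f ` A. c U z" using conv by blast
qed

lemma filtermap_eval_le_eval_filter:
  "filtermap (\<lambda>p. g (fst p) (snd p)) W \<le> eval_filter (filtermap g (filtermap fst W)) (filtermap snd W)"
proof -
  have "W \<le> filtermap fst W \<times>\<^sub>F filtermap snd W" by (rule le_prod_filterI) simp_all
  then have "filtermap (\<lambda>(\<psi>, y). \<psi> y) (filtermap (apfst g) W)
      \<le> filtermap (\<lambda>(\<psi>, y). \<psi> y) (filtermap (apfst g) (filtermap fst W \<times>\<^sub>F filtermap snd W))"
    by (intro filtermap_mono)
  then show ?thesis
    by (simp add: eval_filter_def prod_filtermap1 filtermap_filtermap apfst_def map_prod_def split_beta)
qed

lemma eventually_eval_filter_principal:
  "eventually P (eval_filter (principal K) F) \<longleftrightarrow>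
     (\<exists>B. eventually B F \<and> (\<forall>\<phi>\<in>K. \<forall>x. B x \<longrightarrow> P (\<phi> x)))"
  unfolding eval_filter_def eventually_filtermap eventually_prod_filter eventually_principal
  by (auto intro!: exI[of _ "\<lambda>\<phi>. \<phi> \<in> K"])

definition partial_evals :: "('g \<Rightarrow> 'h \<Rightarrow> 'l) set \<Rightarrow> 'h set \<Rightarrow> ('g \<Rightarrow> 'l) set" where
  "partial_evals K C = (\<lambda>(\<phi>, y) x. \<phi> x y) ` (K \<times> C)"

lemma eval_eval_filter_le:
  assumes "eventually (\<lambda>y. y \<in> C) \<H>"
  shows "eval_filter (eval_filter (principal K) F) \<H> \<le> eval_filter (principal (partial_evals K C)) F"
  unfolding le_filter_def
proof (intro allI impI)
  fix P assume "eventually P (eval_filter (principal (partial_evals K C)) F)"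
  then obtain B where "eventually B F" and P: "\<forall>\<phi>\<in>K. \<forall>y\<in>C. \<forall>x. B x \<longrightarrow> P (\<phi> x y)"
    unfolding eventually_eval_filter_principal partial_evals_def by auto
  then have "eventually (\<lambda>\<psi>. \<forall>y\<in>C. P (\<psi> y)) (eval_filter (principal K) F)"
    unfolding eventually_eval_filter_principal by blast
  with assms show "eventually P (eval_filter (eval_filter (principal K) F) \<H>)"
    unfolding eval_filter_def[of _ \<H>] eventually_filtermap eventually_prod_filter by force
qed

lemma eval_filter_principal_le:
  assumes "\<And>\<phi> x. \<phi> \<in> K \<Longrightarrow> \<phi> x \<in> S"
  shows "eval_filter (principal K) F \<le> principal S"
  unfolding le_principal eventually_eval_filter_principal using assms eventually_True by blast

lemma conv_T_mono: "conv_T F x \<Longrightarrow> G \<le> F \<Longrightarrow> conv_T G x"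
  unfolding conv_T_def using filterlim_mono by blast

lemma zero_in_Gamma_T: "0 \<in> Gamma c conv_T"
  unfolding Gamma_def conv_T_def by (simp add: filterlim_filtermap)

text \<open>A partial evaluation x \<mapsto> \<phi> x y of \<phi> \<in> Gamma(G, Gamma_c H) lies in Gamma(G, T):
  continuous convergence applied to the point filter of y.\<close>
lemma Gamma_c_partial_eval:
  assumes "\<phi> \<in> Gamma cG (conv_c cH conv_T)" "conv_space UNIV cH"
  shows "(\<lambda>x. \<phi> x y) \<in> Gamma cG conv_T"
  unfolding Gamma_def
proof (intro CollectI conjI allI impI)
  fix x x' show "\<phi> (x + x') y = \<phi> x y + \<phi> x' y"
    using assms(1) unfolding Gamma_def by simp
next
  fix F x assume "cG F x"
  then have "conv_c cH conv_T (filtermap \<phi> F) (\<phi> x)" using assms(1) unfolding Gamma_def by blast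
  moreover have "cH (principal {y}) y" using assms(2) unfolding conv_space_def by blast
  ultimately have "conv_T (eval_filter (filtermap \<phi> F) (principal {y})) (\<phi> x y)"
    unfolding conv_c_def by blast
  then show "conv_T (filtermap (\<lambda>x. \<phi> x y) F) (\<phi> x y)"
    by (simp add: eval_filter_def prod_filter_principal_singleton2 filtermap_filtermap)
qed

lemma Gamma_c_value:
  assumes "\<phi> \<in> Gamma cG (conv_c cH conv_T)" "conv_space UNIV cG"
  shows "\<phi> x \<in> Gamma cH conv_T"
proof -
  have "cG (principal {x}) x" using assms(2) unfolding conv_space_def by blast
  then have "conv_c cH conv_T (filtermap \<phi> (principal {x})) (\<phi> x)"
    using assms(1) unfolding Gamma_def by blast
  then show ?thesis unfolding conv_c_def by blast
qed

lemma joint_partial_eval_conv: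
  assumes "conv_s cG (conv_c cH conv_T) (filtermap fst W) \<phi>" and "cH (filtermap snd W) y"
  shows "conv_T (filtermap (\<lambda>p. fst p x (snd p)) W) (\<phi> x y)"
proof (rule conv_T_mono)
  have "conv_c cH conv_T (filtermap (\<lambda>\<psi>. \<psi> x) (filtermap fst W)) (\<phi> x)"
    using assms(1) unfolding conv_s_def by blast
  with assms(2)
  show "conv_T (eval_filter (filtermap (\<lambda>\<psi>. \<psi> x) (filtermap fst W)) (filtermap snd W)) (\<phi> x y)"
    unfolding conv_c_def by blast
  show "filtermap (\<lambda>p. fst p x (snd p)) W
      \<le> eval_filter (filtermap (\<lambda>\<psi>. \<psi> x) (filtermap fst W)) (filtermap snd W)"
    by (rule filtermap_eval_le_eval_filter[of "\<lambda>\<psi>. \<psi> x"])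
qed

lemma partial_evals_compact:
  fixes cG :: "'g::ab_group_add filter \<Rightarrow> 'g \<Rightarrow> bool"
    and cH :: "'h::ab_group_add filter \<Rightarrow> 'h \<Rightarrow> bool"
  assumes sH: "conv_space UNIV cH"
    and K: "conv_compact (Gamma cG (conv_c cH conv_T)) (conv_s cG (conv_c cH conv_T)) K"
    and C: "conv_compact UNIV cH C"
  shows "conv_compact (Gamma cG conv_T) (conv_s cG conv_T) (partial_evals K C)"
proof -
  define ev :: "('g \<Rightarrow> 'h \<Rightarrow> torus) \<times> 'h \<Rightarrow> 'g \<Rightarrow> torus" where "ev = (\<lambda>(\<phi>, y) x. \<phi> x y)"
  have KG: "K \<subseteq> Gamma cG (conv_c cH conv_T)" using K unfolding conv_compact_def by blast
  have MG: "ev ` (K \<times> C) \<subseteq> Gamma cG conv_T"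
    using Gamma_c_partial_eval[OF _ sH] KG unfolding ev_def by auto
  have "conv_compact (Gamma cG conv_T) (conv_s cG conv_T) (ev ` (K \<times> C))"
  proof (rule conv_compact_image[OF MG])
    fix W assume W: "ultrafilter W" "W \<le> principal (K \<times> C)"
    have "filtermap fst W \<le> principal K" "filtermap snd W \<le> principal C"
      using W(2) by (auto simp: le_principal eventually_filtermap elim!: eventually_mono)
    then obtain \<phi> y where "\<phi> \<in> K" "conv_s cG (conv_c cH conv_T) (filtermap fst W) \<phi>"
      and "y \<in> C" "cH (filtermap snd W) y"
      using K C ultrafilter_filtermap[OF W(1)] unfolding conv_compact_def by meson
    have "conv_T (filtermap (\<lambda>p. fst p x (snd p)) W) (\<phi> x y)" for x
      using joint_partial_eval_conv \<open>conv_s _ _ _ \<phi>\<close> \<open>cH _ y\<close> by blast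
    then have "conv_T (filtermap (\<lambda>\<psi>. \<psi> x) (filtermap ev W)) (\<phi> x y)" for x
      by (simp add: filtermap_filtermap ev_def case_prod_beta)
    moreover have "filtermap ev W \<le> principal (Gamma cG conv_T)"
      using W(2) MG by (auto simp: le_principal eventually_filtermap elim!: eventually_mono)
    moreover have "ev (\<phi>, y) \<in> Gamma cG conv_T" using MG \<open>\<phi> \<in> K\<close> \<open>y \<in> C\<close> by blast
    ultimately have "conv_s cG conv_T (filtermap ev W) (ev (\<phi>, y))"
      unfolding conv_s_def by (simp add: ev_def)
    then show "\<exists>p\<in>K \<times> C. conv_s cG conv_T (filtermap ev W) (ev p)"
      using \<open>\<phi> \<in> K\<close> \<open>y \<in> C\<close> by blast
  qed
  then show ?thesis unfolding partial_evals_def ev_def .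
qed

lemma equicontinuous_by_partial_evals:
  fixes cH :: "'h::ab_group_add filter \<Rightarrow> 'h \<Rightarrow> bool"
  assumes KG: "K \<subseteq> Gamma cG (conv_c cH conv_T)" and sG: "conv_space UNIV cG"
    and lc: "locally_compact_conv UNIV cH"
    and M: "\<And>C. conv_compact UNIV cH C \<Longrightarrow> equicontinuous cG conv_T (partial_evals K C)"
  shows "equicontinuous cG (conv_c cH conv_T) K"
  unfolding equicontinuous_def
proof (intro conjI allI impI KG)
  fix F assume F: "cG F 0"
  show "conv_c cH conv_T (eval_filter (principal K) F) 0"
    unfolding conv_c_def
  proof (intro conjI allI impI zero_in_Gamma_T)
    show "eval_filter (principal K) F \<le> principal (Gamma cH conv_T)"
      using KG Gamma_c_value[OF _ sG] by (intro eval_filter_principal_le) blast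
  next
    fix \<H> h assume "cH \<H> h"
    then obtain C where "conv_compact UNIV cH C" "eventually (\<lambda>y. y \<in> C) \<H>"
      using lc unfolding locally_compact_conv_def by blast
    then have "conv_T (eval_filter (principal (partial_evals K C)) F) 0"
      using M F unfolding equicontinuous_def by blast
    then show "conv_T (eval_filter (eval_filter (principal K) F) \<H>) ((0 :: 'h \<Rightarrow> torus) h)"
      using conv_T_mono[OF _ eval_eval_filter_le[OF \<open>eventually _ \<H>\<close>]] by simp
  qed
qed

theorem theorem2p14:
  fixes cG :: "'g::ab_group_add filter \<Rightarrow> 'g \<Rightarrow> bool"
    and cH :: "'h::ab_group_add filter \<Rightarrow> 'h \<Rightarrow> bool"
    and K :: "('g \<Rightarrow> 'h \<Rightarrow> torus) set"
  assumes "conv_group UNIV cG" and "g_barrelled cG"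
    and "conv_group UNIV cH" and "locally_compact_conv UNIV cH"
    and "conv_compact (Gamma cG (conv_c cH conv_T)) (conv_s cG (conv_c cH conv_T)) K"
  shows "equicontinuous cG (conv_c cH conv_T) K"
proof (rule equicontinuous_by_partial_evals)
  show "K \<subseteq> Gamma cG (conv_c cH conv_T)" using assms(5) unfolding conv_compact_def by blast
  show "conv_space UNIV cG" using assms(1) unfolding conv_group_def by blast
  show "locally_compact_conv UNIV cH" by (rule assms(4))
  fix C assume "conv_compact UNIV cH C"
  moreover have "conv_space UNIV cH" using assms(3) unfolding conv_group_def by blast
  ultimately have "conv_compact (Gamma cG conv_T) (conv_s cG conv_T) (partial_evals K C)"
    using partial_evals_compact assms(5) by blast
  then show "equicontinuous cG conv_T (partial_evals K C)"
    using assms(2) unfolding g_barrelled_def by blast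
qed

end
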